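(* For every $D>0$ there exists $\delta=\delta(D)>0$ such that the following holds. For any integers $K,N\geq 8$ and any measurable quasi-periodic function $G$ on $\mathbb{R}^2$ with $|G|\geq D$ almost everywhere, there exists a measurable set $S\subseteq[0,1]^2$ of Lebesgue measure at least $1/(NK)$ such that every $(x,y)\in S$ satisfies $$|G(x+1/K,y)-G(x,y)|\geq\delta\quad\text{or}\quad |G(x,y+1/N)-G(x,y)|\geq\delta.$$
   Context: A function $G$ on $\mathbb{R}^2$ is quasi-periodic if $G(x,y+1)=G(x,y)$ and $G(x+1,y)=e^{2\pi i y}G(x,y)$ for all $(x,y)\in\mathbb{R}^2$. *)

theory Defs
  imports "HOL-Analysis.Analysis"
begin

definition quasi_periodic :: "(real \<times> real \<Rightarrow> complex) \<Rightarrow> bool" where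
  "quasi_periodic G \<longleftrightarrow>
     (\<forall>x y. G (x, y + 1) = G (x, y) \<and>
            G (x + 1, y) = exp (2 * pi * \<i> * complex_of_real y) * G (x, y))"

end

theory Submission
  imports Defs
begin

(* Proof idea (a discrete winding-number argument).
   Sample a quasi-periodic G on the grid (x + j/K, y + k/N), 0 <= j <= K, 0 <= k <= N.
   If G is large there and no sample lies in the jump set, i.e. G never jumps by D/2 along
   a grid edge, then every edge ratio has argument in [-pi/4, pi/4]; these arguments add up
   around each grid square (plaquette_Arg), so the row sums of the horizontal phase
   increments change from row k to row k+1 by exactly the twist 2 pi/N picked up at x + 1
   (discrete_winding_vanishes).  Periodicity in y forces the total change 2 pi to vanish,
   a contradiction (twisted_grid_turns, grid_meets_jump_set).
   Hence for almost every q in the small box Q = (0,1/K) x (0,1/N) one of the K N grid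
   translates of q lies in the jump set restricted to the unit square.  Since the grid
   translates of Q are disjoint, the jump set has measure at least |Q| = 1/(N K)
   (grid_shift_into_jump_set, measure_le_of_translates_cover, jump_set_measure_bound);
   lemma3 follows with delta = D/2. *)

lemma Arg_div_small:
  fixes a b :: complex
  assumes "a \<noteq> 0" and "norm (b - a) < norm a / 2"
  shows "\<bar>Arg (b / a)\<bar> \<le> pi / 4"
proof -
  define z where "z = b / a"
  have "z - 1 = (b - a) / a"
    using assms(1) by (simp add: z_def diff_divide_distrib)
  then have "norm (z - 1) = norm (b - a) / norm a"
    by (simp add: norm_divide)
  with assms have "norm (z - 1) < 1 / 2"
    by (simp add: divide_less_eq mult.commute)
  then have re: "Re z > 1 / 2" and im: "\<bar>Im z\<bar> < 1 / 2"
    using abs_Re_le_cmod[of "z - 1"] abs_Im_le_cmod[of "z - 1"] by auto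
  then have "\<bar>Im z / Re z\<bar> \<le> 1"
    by (simp add: abs_divide divide_le_eq_1)
  then have "\<bar>arctan (Im z / Re z)\<bar> \<le> arctan 1"
    by (metis abs_ge_minus_self abs_le_iff arctan_le_iff arctan_minus)
  moreover have "Arg z = arctan (Im z / Re z)"
    using re by (intro arg_conv_arctan) simp
  ultimately show ?thesis
    by (simp add: z_def arctan_one)
qed

lemma Arg_cis_times:
  assumes "z \<noteq> 0" and "\<bar>t\<bar> < pi" and "\<bar>Arg z + t\<bar> < pi"
  shows "Arg (cis t * z) = Arg z + t"
proof -
  have "Arg (cis t) = t"
    using assms(2) by (intro Arg_cis) auto
  with assms show ?thesis
    by (subst Arg_times) (auto simp: abs_less_iff)
qed

(* Phases add along the two paths a-b-c and a-d-c around a square when no wrap-around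
   occurs: both sums equal Arg (c / a). *)
lemma plaquette_Arg:
  fixes a b c d :: complex
  assumes "a \<noteq> 0" "b \<noteq> 0" "c \<noteq> 0" "d \<noteq> 0"
    and "\<bar>Arg (b / a)\<bar> + \<bar>Arg (c / b)\<bar> < pi" and "\<bar>Arg (d / a)\<bar> + \<bar>Arg (c / d)\<bar> < pi"
  shows "Arg (b / a) + Arg (c / b) = Arg (d / a) + Arg (c / d)"
proof -
  have "Arg (c / a) = Arg ((b / a) * (c / b))" "Arg (c / a) = Arg ((d / a) * (c / d))"
    using assms(2,4) by simp_all
  moreover have "Arg ((b / a) * (c / b)) = Arg (b / a) + Arg (c / b)"
    using assms(1-3,5) by (intro Arg_times) auto
  moreover have "Arg ((d / a) * (c / d)) = Arg (d / a) + Arg (c / d)"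
    using assms(1,3,4,6) by (intro Arg_times) auto
  ultimately show ?thesis by simp
qed

lemma Arg_ratio_twist:
  fixes p q :: complex and s t :: real
  assumes "p \<noteq> 0" "q \<noteq> 0" "\<bar>Arg (q / p)\<bar> \<le> pi / 4" "0 \<le> t" "t \<le> pi / 4"
  shows "Arg ((cis (s + t) * q) / (cis s * p)) = Arg (q / p) + t"
proof -
  have "(cis (s + t) * q) / (cis s * p) = cis t * (q / p)"
    by (simp add: cis_mult [symmetric] cis_divide field_simps)
  moreover have "Arg (cis t * (q / p)) = Arg (q / p) + t"
  proof (rule Arg_cis_times)
    show "q / p \<noteq> 0"
      using assms(1,2) by simp
    show "\<bar>t\<bar> < pi" "\<bar>Arg (q / p) + t\<bar> < pi"
      using assms(3-5) pi_gt_zero by arith+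
  qed
  ultimately show ?thesis by simp
qed

(* Discrete Stokes: a closed 1-form on the K x N grid, periodic in the second index and
   twisted by tau between the first and the last column, has N * tau = 0. *)
lemma discrete_winding_vanishes:
  fixes h v :: "nat \<Rightarrow> nat \<Rightarrow> real" and K N :: nat and \<tau> :: real
  assumes closed: "\<And>j k. j < K \<Longrightarrow> k < N \<Longrightarrow> h j k + v (Suc j) k = v j k + h j (Suc k)"
    and twist: "\<And>k. k < N \<Longrightarrow> v K k = v 0 k + \<tau>"
    and per: "\<And>j. j < K \<Longrightarrow> h j N = h j 0"
  shows "real N * \<tau> = 0"
proof -
  define A where "A k = (\<Sum>j<K. h j k)" for k
  have A_step: "A (Suc k) = A k + \<tau>" if "k < N" for k
  proof -
    have "A (Suc k) - A k = (\<Sum>j<K. v (Suc j) k - v j k)"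
      unfolding A_def sum_subtractf[symmetric]
    proof (rule sum.cong)
      show "h j (Suc k) - h j k = v (Suc j) k - v j k" if "j \<in> {..<K}" for j
        using closed[of j k] that \<open>k < N\<close> by simp
    qed simp
    also have "\<dots> = v K k - v 0 k"
      by (rule sum_lessThan_telescope)
    finally show ?thesis
      using twist[OF that] by simp
  qed
  have A_lin: "A k = A 0 + real k * \<tau>" if "k \<le> N" for k
    using that
  proof (induction k)
    case (Suc k)
    then show ?case
      using A_step[of k] by (simp add: algebra_simps)
  qed simp
  have "A N = A 0"
    unfolding A_def using per by simp
  then show ?thesis
    using A_lin[of N] by simp
qed

lemma twisted_grid_boundary:
  fixes g :: "nat \<Rightarrow> nat \<Rightarrow> complex" and K N :: nat and c :: real
  assumes "N \<ge> 1" and "K \<ge> 1"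
    and nz: "\<And>j k. j < K \<Longrightarrow> k < N \<Longrightarrow> g j k \<noteq> 0"
    and hor: "\<And>j k. j < K \<Longrightarrow> k < N \<Longrightarrow> \<bar>Arg (g (Suc j) k / g j k)\<bar> \<le> pi / 4"
    and per: "\<And>j. g j N = g j 0"
    and tw: "\<And>k. g K k = cis (c + 2 * pi * k / N) * g 0 k"
  shows "\<And>j k. j \<le> K \<Longrightarrow> k \<le> N \<Longrightarrow> g j k \<noteq> 0"
    and "\<And>j. j < K \<Longrightarrow> \<bar>Arg (g (Suc j) N / g j N)\<bar> \<le> pi / 4"
proof -
  have nz_col: "g j k \<noteq> 0" if "j < K" "k \<le> N" for j k
    using nz[of j k] nz[of j 0] per[of j] that assms(1) by (cases "k = N") auto
  show "g j k \<noteq> 0" if "j \<le> K" "k \<le> N" for j k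
    using nz_col[of j k] nz_col[of 0 k] tw[of k] that assms(2) by (cases "j = K") auto
  show "\<bar>Arg (g (Suc j) N / g j N)\<bar> \<le> pi / 4" if "j < K" for j
    using hor[of j 0] per[of j] per[of "Suc j"] that assms(1) by simp
qed

lemma twisted_grid_turns:
  fixes g :: "nat \<Rightarrow> nat \<Rightarrow> complex" and K N :: nat and c :: real
  assumes N8: "N \<ge> 8" and K1: "K \<ge> 1"
    and nz: "\<And>j k. j < K \<Longrightarrow> k < N \<Longrightarrow> g j k \<noteq> 0"
    and hor: "\<And>j k. j < K \<Longrightarrow> k < N \<Longrightarrow> \<bar>Arg (g (Suc j) k / g j k)\<bar> \<le> pi / 4"
    and ver: "\<And>j k. j < K \<Longrightarrow> k < N \<Longrightarrow> \<bar>Arg (g j (Suc k) / g j k)\<bar> \<le> pi / 4"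
    and per: "\<And>j. g j N = g j 0"
    and tw: "\<And>k. g K k = cis (c + 2 * pi * k / N) * g 0 k"
  shows False
proof -
  define h where "h j k = Arg (g (Suc j) k / g j k)" for j k
  define v where "v j k = Arg (g j (Suc k) / g j k)" for j k
  have N_pos: "real N > 0" and step_pos: "2 * pi / N > 0" and step_small: "2 * pi / N \<le> pi / 4"
    using N8 pi_gt_zero by (auto simp: field_simps)
  have nz_grid: "\<And>j k. j \<le> K \<Longrightarrow> k \<le> N \<Longrightarrow> g j k \<noteq> 0"
    and h_top: "\<And>j. j < K \<Longrightarrow> \<bar>Arg (g (Suc j) N / g j N)\<bar> \<le> pi / 4"
    using twisted_grid_boundary[OF _ K1 nz hor per tw] N8 by auto
  have h_small: "\<bar>h j k\<bar> \<le> pi / 4" if "j < K" "k \<le> N" for j k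
    using h_top[of j] hor[of j k] that unfolding h_def by (cases "k = N") auto
  have v_twist: "v K k = v 0 k + 2 * pi / N" if "k < N" for k
  proof -
    have "c + 2 * pi * Suc k / N = (c + 2 * pi * k / N) + 2 * pi / N"
      by (simp add: add_divide_distrib algebra_simps)
    then have "v K k = Arg ((cis ((c + 2 * pi * k / N) + 2 * pi / N) * g 0 (Suc k))
                          / (cis (c + 2 * pi * k / N) * g 0 k))"
      unfolding v_def tw by (simp add: add.assoc)
    also have "\<dots> = v 0 k + 2 * pi / N"
      unfolding v_def using nz_grid[of 0 k] nz_grid[of 0 "Suc k"] ver[of 0 k] K1 that
      by (intro Arg_ratio_twist) (use step_pos step_small in auto)
    finally show ?thesis .
  qed
  have v_small: "\<bar>v j k\<bar> \<le> pi / 2" if "j \<le> K" "k < N" for j k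
  proof (cases "j = K")
    case True
    have "\<bar>v 0 k\<bar> \<le> pi / 4"
      using ver[of 0 k] K1 that unfolding v_def by simp
    then have "\<bar>v K k\<bar> \<le> pi / 2"
      using v_twist[OF that(2)] step_small step_pos by arith
    then show ?thesis
      using True by simp
  next
    case False
    then show ?thesis
      using ver[of j k] that pi_gt_zero unfolding v_def by simp
  qed
  have closed: "h j k + v (Suc j) k = v j k + h j (Suc k)" if "j < K" "k < N" for j k
    unfolding h_def v_def
  proof (rule plaquette_Arg)
    have "\<bar>h j k\<bar> \<le> pi / 4" "\<bar>v (Suc j) k\<bar> \<le> pi / 2"
      using h_small v_small that by simp_all
    then show "\<bar>Arg (g (Suc j) k / g j k)\<bar> + \<bar>Arg (g (Suc j) (Suc k) / g (Suc j) k)\<bar> < pi"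
      using pi_gt_zero unfolding h_def v_def by linarith
    have "\<bar>v j k\<bar> \<le> pi / 2" "\<bar>h j (Suc k)\<bar> \<le> pi / 4"
      using h_small v_small that by simp_all
    then show "\<bar>Arg (g j (Suc k) / g j k)\<bar> + \<bar>Arg (g (Suc j) (Suc k) / g j (Suc k))\<bar> < pi"
      using pi_gt_zero unfolding h_def v_def by linarith
  qed (use nz_grid that in auto)
  have "real N * (2 * pi / N) = 0"
  proof (rule discrete_winding_vanishes[of K N h v])
    show "h j N = h j 0" for j
      unfolding h_def per ..
  qed (use closed v_twist in auto)
  then show False
    using N_pos by simp
qed

lemma quasi_periodicD:
  assumes "quasi_periodic G"
  shows "G (x, y + 1) = G (x, y)" and "G (x + 1, y) = cis (2 * pi * y) * G (x, y)"
proof -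
  have "exp (2 * pi * \<i> * complex_of_real y) = cis (2 * pi * y)"
    by (simp add: cis_conv_exp mult_ac)
  then show "G (x, y + 1) = G (x, y)" "G (x + 1, y) = cis (2 * pi * y) * G (x, y)"
    using assms unfolding quasi_periodic_def by simp_all
qed

definition jump_set :: "(real \<times> real \<Rightarrow> complex) \<Rightarrow> real \<Rightarrow> real \<Rightarrow> real \<Rightarrow> (real \<times> real) set" where
  "jump_set G a b \<delta> =
     {(x, y). \<delta> \<le> norm (G (x + a, y) - G (x, y)) \<or> \<delta> \<le> norm (G (x, y + b) - G (x, y))}"

lemma jump_set_measurable:
  assumes G: "G \<in> borel_measurable lebesgue"
  shows "jump_set G a b \<delta> \<in> sets lebesgue"
proof -
  have shift: "(\<lambda>p. norm (G (t + 1 *\<^sub>R p) - G p)) \<in> borel_measurable lebesgue" for t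
    using borel_measurable_affine[OF G, of 1 t] G by measurable
  have "jump_set G a b \<delta> =
      {p \<in> space lebesgue. \<delta> \<le> norm (G ((a, 0) + 1 *\<^sub>R p) - G p)} \<union>
      {p \<in> space lebesgue. \<delta> \<le> norm (G ((0, b) + 1 *\<^sub>R p) - G p)}"
    by (auto simp: jump_set_def add.commute)
  then show ?thesis
    using shift[of "(a, 0)"] shift[of "(0, b)"] by (auto simp: borel_measurable_iff_ge)
qed

lemma grid_meets_jump_set:
  fixes G :: "real \<times> real \<Rightarrow> complex" and K N :: nat and D x y :: real
  assumes qp: "quasi_periodic G" and K1: "K \<ge> 1" and N8: "N \<ge> 8" and D: "D > 0"
    and big: "\<And>j k. j < K \<Longrightarrow> k < N \<Longrightarrow> D \<le> norm (G (x + j / K, y + k / N))"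
  shows "\<exists>j<K. \<exists>k<N. (x + j / K, y + k / N) \<in> jump_set G (1 / K) (1 / N) (D / 2)"
proof (rule ccontr)
  assume no_jump: "\<not> (\<exists>j<K. \<exists>k<N. (x + j / K, y + k / N) \<in> jump_set G (1 / K) (1 / N) (D / 2))"
  define g where "g j k = G (x + j / K, y + k / N)" for j k :: nat
  have small: "norm (g (Suc j) k - g j k) < D / 2" "norm (g j (Suc k) - g j k) < D / 2"
    if "j < K" "k < N" for j k
  proof -
    have "(x + j / K, y + k / N) \<notin> jump_set G (1 / K) (1 / N) (D / 2)"
      using no_jump that by blast
    moreover have "x + Suc j / K = x + j / K + 1 / K" "y + Suc k / N = y + k / N + 1 / N"
      by (simp_all add: add_divide_distrib)
    ultimately show "norm (g (Suc j) k - g j k) < D / 2" "norm (g j (Suc k) - g j k) < D / 2"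
      unfolding jump_set_def g_def by (auto simp: add.assoc)
  qed
  have near: "\<bar>Arg (g' / g j k)\<bar> \<le> pi / 4" if "j < K" "k < N" "norm (g' - g j k) < D / 2" for j k g'
  proof (rule Arg_div_small)
    show "g j k \<noteq> 0" "norm (g' - g j k) < norm (g j k) / 2"
      using big[OF that(1,2)] that(3) D unfolding g_def by auto
  qed
  show False
  proof (rule twisted_grid_turns[of N K g])
    show "g j k \<noteq> 0" if "j < K" "k < N" for j k
      using big[OF that] D unfolding g_def by auto
    show "\<bar>Arg (g (Suc j) k / g j k)\<bar> \<le> pi / 4" "\<bar>Arg (g j (Suc k) / g j k)\<bar> \<le> pi / 4"
      if "j < K" "k < N" for j k
      using near small that by simp_all
    show "g j N = g j 0" for j
      using N8 quasi_periodicD(1)[OF qp] by (simp add: g_def)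
    show "g K k = cis (2 * pi * y + 2 * pi * k / N) * g 0 k" for k
    proof -
      have "g K k = G (x + 1, y + k / N)"
        using K1 by (simp add: g_def)
      then show ?thesis
        using quasi_periodicD(2)[OF qp, of x "y + k / N"] by (simp add: g_def algebra_simps)
    qed
  qed (use K1 N8 in auto)
qed

(* Lebesgue measure is translation invariant, so are almost-everywhere statements. *)
lemma AE_lebesgue_translate:
  fixes P :: "'a::euclidean_space \<Rightarrow> bool"
  assumes "AE p in lebesgue. P p"
  shows "AE q in lebesgue. P (t + q)"
proof -
  obtain M where M: "{p \<in> space lebesgue. \<not> P p} \<subseteq> M" "emeasure lebesgue M = 0" "M \<in> sets lebesgue"
    using assms by (rule AE_E)
  then have "negligible M"
    by (simp add: negligible_iff_null_sets null_setsI)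
  then have "(+) (- t) ` M \<in> null_sets lebesgue"
    using negligible_translation[of M "- t"] by (simp only: negligible_iff_null_sets)
  moreover have "{q \<in> space lebesgue. \<not> P (t + q)} \<subseteq> (+) (- t) ` M"
    using M(1) by (force intro: image_eqI[of _ _ "t + q" for q])
  ultimately show ?thesis
    by (rule AE_I')
qed

lemma measure_le_of_translates_cover:
  fixes Q S T :: "'a::euclidean_space set"
  assumes Q: "Q \<in> lmeasurable" and S: "S \<in> lmeasurable" and T: "finite T"
    and disj: "pairwise (\<lambda>t t'. disjnt ((+) t ` Q) ((+) t' ` Q)) T"
    and cover: "AE q in lebesgue. q \<in> Q \<longrightarrow> (\<exists>t\<in>T. t + q \<in> S)"
  shows "measure lebesgue Q \<le> measure lebesgue S"
proof -
  define piece where "piece t = S \<inter> (+) t ` Q" for t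
  have piece: "piece t \<in> lmeasurable" for t
    unfolding piece_def by (intro fmeasurable_Int_fmeasurable S fmeasurableD measurable_translation Q)
  have shifted: "(\<lambda>p. p - t) ` piece t \<in> lmeasurable" for t
    by (rule measurable_translation_subtract[OF piece])
  obtain M where M: "{q \<in> space lebesgue. \<not> (q \<in> Q \<longrightarrow> (\<exists>t\<in>T. t + q \<in> S))} \<subseteq> M"
    and M_null: "emeasure lebesgue M = 0" "M \<in> sets lebesgue"
    using cover by (rule AE_E)
  from M_null have M_null: "M \<in> null_sets lebesgue"
    by (rule null_setsI)
  have "Q - M \<subseteq> (\<Union>t\<in>T. (\<lambda>p. p - t) ` piece t)"
    using M by (force simp: piece_def intro: image_eqI[of _ _ "t + q" for t q])
  then have "measure lebesgue (Q - M) \<le> measure lebesgue (\<Union>t\<in>T. (\<lambda>p. p - t) ` piece t)"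
    using Q M_null T shifted by (intro measure_mono_fmeasurable) auto
  also have "\<dots> \<le> (\<Sum>t\<in>T. measure lebesgue ((\<lambda>p. p - t) ` piece t))"
    using T shifted by (intro measure_UNION_le) auto
  also have "\<dots> = (\<Sum>t\<in>T. measure lebesgue (piece t))"
    by (simp add: measure_translation_subtract)
  also have "\<dots> = measure lebesgue (\<Union>t\<in>T. piece t)"
  proof (rule measure_UNION'[symmetric])
    show "pairwise (\<lambda>t t'. disjnt (piece t) (piece t')) T"
      using disj unfolding pairwise_def disjnt_def piece_def by blast
  qed (use T piece in auto)
  also have "\<dots> \<le> measure lebesgue S"
  proof (rule measure_mono_fmeasurable)
    show "(\<Union>t\<in>T. piece t) \<in> sets lebesgue"
      using T piece by (intro sets.finite_UN) auto
  qed (use S in \<open>auto simp: piece_def\<close>)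
  finally show ?thesis
    using Q M_null by (simp add: measure_Diff_null_set)
qed

lemma mem_box_pair:
  "(x :: real, y :: real) \<in> box (0, 0) (a, b) \<longleftrightarrow> 0 < x \<and> x < a \<and> 0 < y \<and> y < b"
  by (auto simp: mem_box Basis_prod_def inner_prod_def)

lemma measure_box_pair:
  assumes "a > 0" "b > 0"
  shows "measure lebesgue (box (0::real, 0::real) (a, b)) = a * b"
  using assms by (simp add: measure_lborel_box_eq Basis_prod_def inner_prod_def)

lemma step_cell_unique:
  fixes j j' :: nat and a u u' :: real
  assumes "0 < u" "u < a" "0 < u'" "u' < a" "j * a + u = j' * a + u'"
  shows "j = j'"
proof -
  have "real j * a < (real j' + 1) * a" "real j' * a < (real j + 1) * a"
    using assms by (simp_all add: algebra_simps)
  then have "real j < real j' + 1" "real j' < real j + 1"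
    using assms(1,2) by (simp_all add: mult_less_cancel_right)
  then show ?thesis by linarith
qed

lemma box_translates_disjoint:
  assumes "a > 0" "b > 0"
  shows "pairwise (\<lambda>t t'. disjnt ((+) t ` box (0, 0) (a, b)) ((+) t' ` box (0::real, 0::real) (a, b)))
           ((\<lambda>(j, k). (real j * a, real k * b)) ` (UNIV :: (nat \<times> nat) set))"
    (is "pairwise _ ?T")
proof (rule pairwiseI)
  fix t t' assume "t \<in> ?T" "t' \<in> ?T" "t \<noteq> t'"
  then obtain j k j' k' :: nat where t: "t = (j * a, k * b)" "t' = (j' * a, k' * b)"
    and jk: "(j, k) \<noteq> (j', k')"
    by auto
  show "disjnt ((+) t ` box (0, 0) (a, b)) ((+) t' ` box (0, 0) (a, b))"
    unfolding disjnt_def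
  proof (rule equals0I)
    fix p assume "p \<in> (+) t ` box (0, 0) (a, b) \<inter> (+) t' ` box (0, 0) (a, b)"
    then obtain u v u' v' where uv: "(u, v) \<in> box (0, 0) (a, b)" "(u', v') \<in> box (0, 0) (a, b)"
      and "p = t + (u, v)" "p = t' + (u', v')"
      by auto
    then have "j * a + u = j' * a + u'" "k * b + v = k' * b + v'"
      unfolding t by simp_all
    then show False
      using step_cell_unique[of u a u' j j'] step_cell_unique[of v b v' k k'] uv jk
      by (auto simp: mem_box_pair)
  qed
qed

lemma grid_point_in_unit_interval:
  fixes j K :: nat and u :: real
  assumes "j < K" "0 < u" "u < 1 / K"
  shows "u + j / K \<in> {0..1}"
proof -
  have "u + j / K < (1 + real j) / K"
    using assms by (simp add: add_divide_distrib)
  also have "\<dots> \<le> 1"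
    using assms(1) by (simp add: divide_le_eq_1)
  finally show ?thesis
    using assms by simp
qed

lemma unit_square_lmeasurable: "{0..1::real} \<times> {0..1::real} \<in> lmeasurable"
proof -
  have "{0..1} \<times> {0..1} = cbox (0::real, 0::real) (1, 1)"
    by (auto simp: mem_box Basis_prod_def inner_prod_def)
  then show ?thesis
    by (simp only: lmeasurable_cbox)
qed

definition grid_shifts :: "nat \<Rightarrow> nat \<Rightarrow> (real \<times> real) set" where
  "grid_shifts K N = (\<lambda>(j, k). (real j / K, real k / N)) ` ({..<K} \<times> {..<N})"

lemma grid_shift_into_jump_set:
  fixes G :: "real \<times> real \<Rightarrow> complex" and K N :: nat and D :: real
  assumes qp: "quasi_periodic G" and K1: "K \<ge> 1" and N8: "N \<ge> 8" and D: "D > 0"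
    and q: "q \<in> box (0, 0) (1 / K, 1 / N)"
    and good: "\<forall>t\<in>grid_shifts K N. D \<le> norm (G (t + q))"
  shows "\<exists>t\<in>grid_shifts K N. t + q \<in> {0..1} \<times> {0..1} \<inter> jump_set G (1 / K) (1 / N) (D / 2)"
proof -
  obtain x y where q_xy: "q = (x, y)" and xy: "0 < x" "x < 1 / K" "0 < y" "y < 1 / N"
    using q by (cases q) (auto simp: mem_box_pair)
  have "D \<le> norm (G (x + j / K, y + k / N))" if "j < K" "k < N" for j k
  proof -
    have "(j / K, k / N) \<in> grid_shifts K N"
      using that unfolding grid_shifts_def by auto
    with good have "D \<le> norm (G ((j / K, k / N) + q))"
      by blast
    then show ?thesis
      by (simp add: q_xy add.commute)
  qed
  then obtain j k where jk: "j < K" "k < N"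
    and jump: "(x + j / K, y + k / N) \<in> jump_set G (1 / K) (1 / N) (D / 2)"
    using grid_meets_jump_set[OF qp K1 N8 D] by blast
  have "(j / K, k / N) \<in> grid_shifts K N"
    using jk unfolding grid_shifts_def by auto
  moreover have "(j / K, k / N) + q \<in> {0..1} \<times> {0..1} \<inter> jump_set G (1 / K) (1 / N) (D / 2)"
    using jump grid_point_in_unit_interval[OF jk(1) xy(1,2)]
      grid_point_in_unit_interval[OF jk(2) xy(3,4)]
    by (simp add: q_xy add.commute)
  ultimately show ?thesis ..
qed

lemma jump_set_measure_bound:
  fixes G :: "real \<times> real \<Rightarrow> complex" and K N :: nat and D :: real
  assumes K1: "K \<ge> 1" and N8: "N \<ge> 8" and D: "D > 0"
    and G: "G \<in> borel_measurable lebesgue" and qp: "quasi_periodic G"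
    and big: "AE p in lebesgue. D \<le> norm (G p)"
  shows "1 / (real N * real K)
           \<le> measure lebesgue ({0..1} \<times> {0..1} \<inter> jump_set G (1 / K) (1 / N) (D / 2))"
proof -
  define Q where "Q = box (0::real, 0::real) (1 / K, 1 / N)"
  have K_pos: "real K > 0" and N_pos: "real N > 0"
    using K1 N8 by auto
  have disj: "pairwise (\<lambda>t t'. disjnt ((+) t ` Q) ((+) t' ` Q)) (grid_shifts K N)"
    unfolding Q_def grid_shifts_def
    by (rule pairwise_subset[OF box_translates_disjoint]) (use K_pos N_pos in auto)
  have "AE q in lebesgue. \<forall>t\<in>grid_shifts K N. D \<le> norm (G (t + q))"
    unfolding grid_shifts_def by (intro AE_finite_allI AE_lebesgue_translate big) auto
  then have cover: "AE q in lebesgue. q \<in> Q \<longrightarrow> (\<exists>t\<in>grid_shifts K N.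
                      t + q \<in> {0..1} \<times> {0..1} \<inter> jump_set G (1 / K) (1 / N) (D / 2))"
    unfolding Q_def by (rule eventually_mono) (use grid_shift_into_jump_set[OF qp K1 N8 D] in blast)
  have "1 / (real N * real K) = measure lebesgue Q"
    unfolding Q_def using measure_box_pair[of "1 / K" "1 / N"] K_pos N_pos by simp
  also have "\<dots> \<le> measure lebesgue ({0..1} \<times> {0..1} \<inter> jump_set G (1 / K) (1 / N) (D / 2))"
  proof (rule measure_le_of_translates_cover[OF _ _ _ disj cover])
    show "{0..1} \<times> {0..1} \<inter> jump_set G (1 / K) (1 / N) (D / 2) \<in> lmeasurable"
      using unit_square_lmeasurable jump_set_measurable[OF G] by (rule fmeasurable_Int_fmeasurable)
  qed (auto simp: Q_def grid_shifts_def)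
  finally show ?thesis .
qed

theorem lemma3:
  fixes D :: real
  assumes "D > 0"
  shows "\<exists>\<delta>>0. \<forall>(K::int) (N::int) (G :: real \<times> real \<Rightarrow> complex).
           K \<ge> 8 \<longrightarrow> N \<ge> 8 \<longrightarrow>
           G \<in> borel_measurable lebesgue \<longrightarrow> quasi_periodic G \<longrightarrow>
           (AE p in lebesgue. norm (G p) \<ge> D) \<longrightarrow>
           (\<exists>S. S \<in> sets lebesgue \<and> S \<subseteq> {0..1} \<times> {0..1} \<and>
                measure lebesgue S \<ge> 1 / (real_of_int N * real_of_int K) \<and>
                (\<forall>(x, y)\<in>S. norm (G (x + 1 / real_of_int K, y) - G (x, y)) \<ge> \<delta> \<or>
                             norm (G (x, y + 1 / real_of_int N) - G (x, y)) \<ge> \<delta>))"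
proof (intro exI[of _ "D / 2"] conjI allI impI)
  fix K N :: int and G :: "real \<times> real \<Rightarrow> complex"
  assume "K \<ge> 8" "N \<ge> 8" and G: "G \<in> borel_measurable lebesgue" and qp: "quasi_periodic G"
    and big: "AE p in lebesgue. norm (G p) \<ge> D"
  then have K: "real_of_int K = real (nat K)" "nat K \<ge> 1" and N: "real_of_int N = real (nat N)" "nat N \<ge> 8"
    by auto
  define S where "S = {0..1} \<times> {0..1} \<inter> jump_set G (1 / real_of_int K) (1 / real_of_int N) (D / 2)"
  have "S \<in> sets lebesgue"
    unfolding S_def using unit_square_lmeasurable jump_set_measurable[OF G] by auto
  moreover have "measure lebesgue S \<ge> 1 / (real_of_int N * real_of_int K)"
    unfolding S_def K(1) N(1) using jump_set_measure_bound[OF K(2) N(2) assms G qp big] .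
  moreover have "\<forall>(x, y)\<in>S. norm (G (x + 1 / real_of_int K, y) - G (x, y)) \<ge> D / 2 \<or>
                             norm (G (x, y + 1 / real_of_int N) - G (x, y)) \<ge> D / 2"
    unfolding S_def jump_set_def by auto
  ultimately show "\<exists>S. S \<in> sets lebesgue \<and> S \<subseteq> {0..1} \<times> {0..1} \<and>
                measure lebesgue S \<ge> 1 / (real_of_int N * real_of_int K) \<and>
                (\<forall>(x, y)\<in>S. norm (G (x + 1 / real_of_int K, y) - G (x, y)) \<ge> D / 2 \<or>
                             norm (G (x, y + 1 / real_of_int N) - G (x, y)) \<ge> D / 2)"
    unfolding S_def by blast
qed (use assms in simp)

end
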